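(* Let $I$ be a binary, friendship-uniform instance with common friendship value $\phi=\phi_{\min}>1$ whose friendship graph $(N,F^* )$ has maximum degree $1$, and let $A$ be the (random) allocation output by FF-CT-RSD$^*$ on $I$ when all agents report their friendships truthfully and choose plots to maximize their utility. Then $\mathbb E(\mathrm{SW}(A))\ge\frac14\,\mathrm{OPT}(I)$.
   Context: Instance: agents $N$, $n=|N|$ plots $\mathcal V$, undirected plot graph $(\mathcal V,\mathcal E)$, valuations $u_i:\mathcal V\to\{0,1\}$ (binary), reciprocal friendship relation $F$ with $\phi_{i,j}=\phi$ for all $(i,j)\in F$ (friendship-uniform); $F^*=\{\{i,j\}:(i,j)\in F\}$. For an allocation (bijection) $A:N\to\mathcal V$, $U_i(A)=u_i(A(i))+\sum_{(i,j)\in F}\phi\,\mathbb I(\{A(i),A(j)\}\in\mathcal E)$, $\mathrm{SW}(A)=\sum_iU_i(A)$, $\mathrm{OPT}(I)=\max_A\mathrm{SW}(A)$. RSD$^*$: in each iteration, the remaining agents report whether they value some still-available plot positively; if some do, one of them is chosen uniformly at random and picks a plot; otherwise remaining agents are arbitrarily paired with remaining plots and the procedure stops. FF-CT-RSD$^*$: each agent reports a friend (or none); let $P$ be the set of pairs $\{i,j\}$ who report each other. While there exists a pair of adjacent unoccupied plots and $P\ne\emptyset$, a pair $\{i,j\}$ is removed from $P$ uniformly at random and $i$ and $j$ pick plots consecutively (in random order). Once $P=\emptyset$ or no two adjacent plots are unoccupied, RSD$^*$ is run on the remaining agents and plots. Expectation is over the mechanism's randomness. *)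

theory Defs
  imports "HOL-Probability.Probability"
begin

record ('a, 'v) inst =
  agents :: "'a set"
  plots  :: "'v set"
  adj    :: "'v \<Rightarrow> 'v \<Rightarrow> bool"
  val    :: "'a \<Rightarrow> 'v \<Rightarrow> real"
  fr     :: "('a \<times> 'a) set"
  phi    :: real

definition wf_inst :: "('a, 'v) inst \<Rightarrow> bool" where
  "wf_inst I \<longleftrightarrow> finite (agents I) \<and> finite (plots I)
     \<and> card (agents I) = card (plots I)
     \<and> (\<forall>x y. adj I x y \<longrightarrow> adj I y x) \<and> (\<forall>x. \<not> adj I x x)
     \<and> fr I \<subseteq> agents I \<times> agents I
     \<and> (\<forall>i j. (i, j) \<in> fr I \<longrightarrow> (j, i) \<in> fr I)
     \<and> (\<forall>i. (i, i) \<notin> fr I)"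

definition binary :: "('a, 'v) inst \<Rightarrow> bool" where
  "binary I \<longleftrightarrow> (\<forall>i v. val I i v = 0 \<or> val I i v = 1)"

definition max_degree_one :: "('a, 'v) inst \<Rightarrow> bool" where
  "max_degree_one I \<longleftrightarrow> (\<forall>i \<in> agents I. card {j. (i, j) \<in> fr I} \<le> 1)
     \<and> (\<exists>i \<in> agents I. card {j. (i, j) \<in> fr I} = 1)"

definition util :: "('a, 'v) inst \<Rightarrow> ('a \<Rightarrow> 'v) \<Rightarrow> 'a \<Rightarrow> real" where
  "util I A i = val I i (A i)
     + (\<Sum>j \<in> {j. (i, j) \<in> fr I}. phi I * (if adj I (A i) (A j) then 1 else 0))"

definition SW :: "('a, 'v) inst \<Rightarrow> ('a \<Rightarrow> 'v) \<Rightarrow> real" where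
  "SW I A = (\<Sum>i \<in> agents I. util I A i)"

definition allocations :: "('a, 'v) inst \<Rightarrow> ('a \<Rightarrow> 'v) set" where
  "allocations I = {A. bij_betw A (agents I) (plots I)}"

definition OPT :: "('a, 'v) inst \<Rightarrow> real" where
  "OPT I = (MAX A \<in> allocations I. SW I A)"

type_synonym ('a, 'v) hist = "('a \<times> 'v) list"

definition free :: "('a, 'v) inst \<Rightarrow> ('a, 'v) hist \<Rightarrow> 'v set" where
  "free I h = plots I - snd ` set h"

definition placed :: "('a, 'v) hist \<Rightarrow> 'a set" where
  "placed h = fst ` set h"

definition pval :: "('a, 'v) inst \<Rightarrow> ('a, 'v) hist \<Rightarrow> 'a \<Rightarrow> 'v \<Rightarrow> real" where
  "pval I h k v = val I k v
     + phi I * real (card {j. (k, j) \<in> fr I \<and> (\<exists>w. map_of h j = Some w \<and> adj I v w)})"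

definition BR :: "('a, 'v) inst \<Rightarrow> ('a, 'v) hist \<Rightarrow> 'a \<Rightarrow> 'v set" where
  "BR I h k = {v \<in> free I h. \<forall>v' \<in> free I h. pval I h k v' \<le> pval I h k v}"

text \<open>When i picks first within a pair {i,j}, j picks immediately afterwards
  (utility-maximizingly). The value of plot v for i is i's resulting utility,
  evaluated (pessimistically) over j's utility-maximizing responses.\<close>
definition fval :: "('a, 'v) inst \<Rightarrow> ('a, 'v) hist \<Rightarrow> 'a \<Rightarrow> 'a \<Rightarrow> 'v \<Rightarrow> real" where
  "fval I h i j v = (MIN w \<in> BR I (h @ [(i, v)]) j. pval I (h @ [(i, v), (j, w)]) i v)"

definition BR1 :: "('a, 'v) inst \<Rightarrow> ('a, 'v) hist \<Rightarrow> 'a \<Rightarrow> 'a \<Rightarrow> 'v set" where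
  "BR1 I h i j = {v \<in> free I h. \<forall>v' \<in> free I h. fval I h i j v' \<le> fval I h i j v}"

text \<open>Deterministic, history-dependent choice rules:
  pf h i j: plot picked by i when picking first in pair {i,j};
  ps h j:   plot picked by j when picking second in a pair;
  pr h i:   plot picked by i in RSD*;
  comp h:   the arbitrary pairing of remaining agents with remaining plots.\<close>
record ('a, 'v) policy =
  pf   :: "('a, 'v) hist \<Rightarrow> 'a \<Rightarrow> 'a \<Rightarrow> 'v"
  ps   :: "('a, 'v) hist \<Rightarrow> 'a \<Rightarrow> 'v"
  pr   :: "('a, 'v) hist \<Rightarrow> 'a \<Rightarrow> 'v"
  comp :: "('a, 'v) hist \<Rightarrow> 'a \<Rightarrow> 'v"

definition utility_maximizing :: "('a, 'v) inst \<Rightarrow> ('a, 'v) policy \<Rightarrow> bool" where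
  "utility_maximizing I \<pi> \<longleftrightarrow>
     (\<forall>h i j. BR1 I h i j \<noteq> {} \<longrightarrow> pf \<pi> h i j \<in> BR1 I h i j)
   \<and> (\<forall>h j. BR I h j \<noteq> {} \<longrightarrow> ps \<pi> h j \<in> BR I h j)
   \<and> (\<forall>h i. BR I h i \<noteq> {} \<longrightarrow> pr \<pi> h i \<in> BR I h i)
   \<and> (\<forall>h. (\<exists>f. bij_betw f (agents I - placed h) (free I h))
          \<longrightarrow> bij_betw (comp \<pi> h) (agents I - placed h) (free I h))"

text \<open>Truthful friendship report (each agent has at most one friend here).\<close>
definition truthful_report :: "('a, 'v) inst \<Rightarrow> 'a \<Rightarrow> 'a option" where
  "truthful_report I i = (if \<exists>j. (i, j) \<in> fr I then Some (THE j. (i, j) \<in> fr I) else None)"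

definition mutual_pairs :: "('a, 'v) inst \<Rightarrow> ('a \<Rightarrow> 'a option) \<Rightarrow> 'a set set" where
  "mutual_pairs I rep = {{i, j} | i j. i \<in> agents I \<and> j \<in> agents I \<and> i \<noteq> j
                                     \<and> rep i = Some j \<and> rep j = Some i}"

definition complete :: "('a, 'v) policy \<Rightarrow> ('a, 'v) hist \<Rightarrow> 'a \<Rightarrow> 'v" where
  "complete \<pi> h = (\<lambda>i. case map_of h i of Some v \<Rightarrow> v | None \<Rightarrow> comp \<pi> h i)"

definition adj_free_pair :: "('a, 'v) inst \<Rightarrow> ('a, 'v) hist \<Rightarrow> bool" where
  "adj_free_pair I h \<longleftrightarrow> (\<exists>x \<in> free I h. \<exists>y \<in> free I h. adj I x y)"

text \<open>The mechanism run with a fuel bound (card N steps always suffice since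
  every step places at least one agent). The argument P is the set of pairs
  still to be processed; once the RSD* phase starts, P is set to empty.\<close>
fun run :: "('a, 'v) inst \<Rightarrow> ('a, 'v) policy \<Rightarrow> nat \<Rightarrow> ('a, 'v) hist \<Rightarrow> 'a set set
            \<Rightarrow> ('a \<Rightarrow> 'v) pmf" where
  "run I \<pi> 0 h P = return_pmf (complete \<pi> h)"
| "run I \<pi> (Suc n) h P =
    (if adj_free_pair I h \<and> P \<noteq> {} then
       pmf_of_set P \<bind> (\<lambda>p. pmf_of_set p \<bind> (\<lambda>i.
         let j = (THE j. j \<in> p \<and> j \<noteq> i);
             h1 = h @ [(i, pf \<pi> h i j)];
             h2 = h1 @ [(j, ps \<pi> h1 j)]
         in run I \<pi> n h2 (P - {p})))
     else
       (let C = {i \<in> agents I - placed h. \<exists>v \<in> free I h. val I i v > 0} in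
        if C \<noteq> {} then
          pmf_of_set C \<bind> (\<lambda>i. run I \<pi> n (h @ [(i, pr \<pi> h i)]) {})
        else return_pmf (complete \<pi> h)))"

definition FF_CT_RSD :: "('a, 'v) inst \<Rightarrow> ('a \<Rightarrow> 'a option) \<Rightarrow> ('a, 'v) policy \<Rightarrow> ('a \<Rightarrow> 'v) pmf" where
  "FF_CT_RSD I rep \<pi> = run I \<pi> (card (agents I)) [] (mutual_pairs I rep)"

end

theory Submission
  imports Defs
begin

text \<open>
  Fix an allocation \<open>As\<close> (eventually an optimal one) and measure a partial history \<open>h\<close> by a
  potential: the \<open>As\<close>-value of the agents that are unplaced and whose \<open>As\<close>-plot is still free,
  plus \<open>\<phi>\<close> times the number of friend pairs adjacent under \<open>As\<close> that are still intact, counted as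
  the minimum of those with both agents unplaced and those with both plots free. Initially the
  potential is \<open>SW As\<close>. In a pair round the first friend secures a plot with a free neighbour
  and the second takes it, so the two gain at least \<open>2\<phi>\<close> while the potential drops by at most
  \<open>4 + 4\<phi> \<le> 8\<phi>\<close>. Once the RSD* phase starts, either no pair is left or no two adjacent plots
  are free, so the bond term is \<open>0\<close>; an RSD* round then gives the picker utility at least \<open>1\<close>
  and lowers the potential by at most \<open>2\<close>. When the mechanism stops the potential is
  nonpositive, hence \<open>SW As \<le> 4 SW A\<close> for every outcome \<open>A\<close>.
\<close>

lemma card_le_add_card_Diff: "finite B \<Longrightarrow> card A \<le> card B + card (A - B)"
  by (metis add.commute diff_card_le_card_Diff le_diff_conv)

lemma card_image_set_le_length: "card (f ` set xs) \<le> length xs"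
  by (rule order_trans [OF card_image_le [OF finite_set] card_length])

lemma exists_maximizer:
  fixes f :: "'a \<Rightarrow> 'b::linorder"
  assumes "finite S" "S \<noteq> {}"
  shows "\<exists>v \<in> S. \<forall>v' \<in> S. f v' \<le> f v"
proof -
  obtain v where "v \<in> S" "Max (f ` S) = f v"
    using obtains_MAX [OF assms] by metis
  then show ?thesis using assms(1) by (metis Max_ge finite_imageI imageI)
qed

lemma expectation_ge_of_support:
  fixes f :: "'a \<Rightarrow> real"
  assumes "\<And>x. \<bar>f x\<bar> \<le> K" and "\<And>x. x \<in> set_pmf M \<Longrightarrow> c \<le> f x"
  shows "c \<le> measure_pmf.expectation M f"
proof (rule measure_pmf.integral_ge_const)
  show "integrable (measure_pmf M) f"
    using assms(1) by (intro measure_pmf.integrable_const_bound [where B = K]) auto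
  show "AE x in measure_pmf M. c \<le> f x"
    using assms(2) by (rule AE_pmfI)
qed

lemma free_append [simp]: "free I (h @ ys) = free I h - snd ` set ys"
  unfolding free_def by auto

lemma placed_append [simp]: "placed (h @ ys) = placed h \<union> fst ` set ys"
  unfolding placed_def by auto

lemma placed_Nil [simp]: "placed [] = {}" and free_Nil [simp]: "free I [] = plots I"
  unfolding placed_def free_def by simp_all

lemma map_of_unplaced: "x \<notin> placed h \<Longrightarrow> map_of h x = None"
  by (simp add: map_of_eq_None_iff placed_def)

lemma SW_restrict:
  assumes "fr I \<subseteq> agents I \<times> agents I"
  shows "SW I (restrict A (agents I)) = SW I A"
  unfolding SW_def util_def
proof (rule sum.cong [OF refl])
  fix i assume "i \<in> agents I"
  with assms show "val I i (restrict A (agents I) i)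
      + (\<Sum>j\<in>{j. (i, j) \<in> fr I}.
           phi I * (if adj I (restrict A (agents I) i) (restrict A (agents I) j) then 1 else 0))
    = val I i (A i) + (\<Sum>j\<in>{j. (i, j) \<in> fr I}. phi I * (if adj I (A i) (A j) then 1 else 0))"
    by (intro arg_cong2 [where f = "(+)"] sum.cong) auto
qed

lemma OPT_attained:
  assumes "wf_inst I"
  obtains A where "A \<in> allocations I" "SW I A = OPT I"
proof -
  have fin: "finite (agents I)" "finite (plots I)" and cd: "card (agents I) = card (plots I)"
    and fr: "fr I \<subseteq> agents I \<times> agents I"
    using assms unfolding wf_inst_def by auto
  obtain f where "bij_betw f (agents I) (plots I)"
    using finite_same_card_bij [OF fin cd] by blast
  then have ne: "allocations I \<noteq> {}" unfolding allocations_def by auto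
  have "SW I ` allocations I \<subseteq> SW I ` (PiE (agents I) (\<lambda>_. plots I))"
  proof
    fix x assume "x \<in> SW I ` allocations I"
    then obtain A where A: "bij_betw A (agents I) (plots I)" "x = SW I A"
      unfolding allocations_def by auto
    then have "restrict A (agents I) \<in> PiE (agents I) (\<lambda>_. plots I)"
      using bij_betw_apply [OF A(1)] by (simp add: restrict_PiE_iff)
    then show "x \<in> SW I ` (PiE (agents I) (\<lambda>_. plots I))"
      using A SW_restrict [OF fr] by (metis image_eqI)
  qed
  moreover have "finite (PiE (agents I) (\<lambda>_. plots I))"
    using fin by (simp add: finite_PiE)
  ultimately have "finite (SW I ` allocations I)"
    using finite_subset by blast
  then have "OPT I \<in> SW I ` allocations I"
    unfolding OPT_def using ne by (intro Max_in) auto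
  then obtain A where "A \<in> allocations I" "OPT I = SW I A" by blast
  with that show ?thesis by simp
qed

definition rsd_candidates :: "('a, 'v) inst \<Rightarrow> ('a, 'v) hist \<Rightarrow> 'a set" where
  "rsd_candidates I h = {i \<in> agents I - placed h. \<exists>v \<in> free I h. val I i v > 0}"

definition pair_step :: "('a, 'v) policy \<Rightarrow> ('a, 'v) hist \<Rightarrow> 'a set \<Rightarrow> 'a \<Rightarrow> ('a, 'v) hist" where
  "pair_step \<pi> h p i =
     (let j = (THE j. j \<in> p \<and> j \<noteq> i); h1 = h @ [(i, pf \<pi> h i j)] in h1 @ [(j, ps \<pi> h1 j)])"

definition open_pairs :: "('a, 'v) inst \<Rightarrow> ('a, 'v) hist \<Rightarrow> 'a set set" where
  "open_pairs I h = {{a, b} | a b. (a, b) \<in> fr I \<and> a \<notin> placed h \<and> b \<notin> placed h}"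

lemma run_Suc_pair:
  "adj_free_pair I h \<and> P \<noteq> {} \<Longrightarrow>
   run I \<pi> (Suc n) h P =
     pmf_of_set P \<bind> (\<lambda>p. pmf_of_set p \<bind> (\<lambda>i. run I \<pi> n (pair_step \<pi> h p i) (P - {p})))"
  by (simp add: pair_step_def Let_def)

lemma run_Suc_rsd:
  "\<not> (adj_free_pair I h \<and> P \<noteq> {}) \<Longrightarrow> rsd_candidates I h \<noteq> {} \<Longrightarrow>
   run I \<pi> (Suc n) h P =
     pmf_of_set (rsd_candidates I h) \<bind> (\<lambda>i. run I \<pi> n (h @ [(i, pr \<pi> h i)]) {})"
  by (simp only: run.simps if_False Let_def rsd_candidates_def) simp

lemma run_Suc_stop:
  "\<not> (adj_free_pair I h \<and> P \<noteq> {}) \<Longrightarrow> rsd_candidates I h = {} \<Longrightarrow>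
   run I \<pi> (Suc n) h P = return_pmf (Defs.complete \<pi> h)"
  by (simp only: run.simps if_False Let_def rsd_candidates_def) simp

declare run.simps(2) [simp del]

lemma run_extends_history:
  "A \<in> set_pmf (run I \<pi> n h P) \<Longrightarrow> map_of h x = Some v \<Longrightarrow> A x = v"
proof (induction n arbitrary: h P)
  case 0
  then show ?case by (simp add: complete_def)
next
  case (Suc n)
  consider (pair) "adj_free_pair I h \<and> P \<noteq> {}"
    | (rsd) "\<not> (adj_free_pair I h \<and> P \<noteq> {})" "rsd_candidates I h \<noteq> {}"
    | (stop) "\<not> (adj_free_pair I h \<and> P \<noteq> {})" "rsd_candidates I h = {}"
    by blast
  then show ?case
  proof cases
    case pair
    with Suc.prems(1) obtain p i where "A \<in> set_pmf (run I \<pi> n (pair_step \<pi> h p i) (P - {p}))"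
      by (auto simp: run_Suc_pair)
    then show ?thesis
      using Suc.IH Suc.prems(2) by (auto simp: pair_step_def Let_def map_add_def split: option.splits)
  next
    case rsd
    with Suc.prems(1) obtain i where "A \<in> set_pmf (run I \<pi> n (h @ [(i, pr \<pi> h i)]) {})"
      by (auto simp: run_Suc_rsd)
    then show ?thesis
      using Suc.IH Suc.prems(2) by (auto simp: map_add_def split: option.splits)
  next
    case stop
    then show ?thesis
      using Suc.prems by (simp add: run_Suc_stop complete_def)
  qed
qed

locale binary_matching_inst =
  fixes I :: "('a, 'v) inst"
  assumes wf: "wf_inst I"
    and bin: "binary I"
    and phi_gt_1: "phi I > 1"
    and matching: "\<forall>i \<in> agents I. card {j. (i, j) \<in> fr I} \<le> 1"
begin

lemma finite_agents: "finite (agents I)" and finite_plots: "finite (plots I)"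
  and adj_sym: "adj I x y \<Longrightarrow> adj I y x" and adj_irrefl: "\<not> adj I x x"
  and fr_agents: "fr I \<subseteq> agents I \<times> agents I"
  and fr_sym: "(i, j) \<in> fr I \<Longrightarrow> (j, i) \<in> fr I" and fr_irrefl: "(i, i) \<notin> fr I"
  using wf unfolding wf_inst_def by auto

lemma val_cases: "val I x v = 0 \<or> val I x v = 1"
  using bin unfolding binary_def by blast

lemma val_nonneg: "0 \<le> val I x v" and val_le_1: "val I x v \<le> 1"
  using val_cases [of x v] by auto

lemma phi_pos: "phi I > 0"
  using phi_gt_1 by simp

lemma finite_fr: "finite (fr I)"
  using fr_agents finite_agents by (meson finite_SigmaI finite_subset)

lemma finite_friends: "finite {j. (i, j) \<in> fr I}"
  using fr_agents by (intro finite_subset [OF _ finite_agents]) auto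

lemma friend_unique: "(x, y) \<in> fr I \<Longrightarrow> (x, z) \<in> fr I \<Longrightarrow> y = z"
proof -
  assume xy: "(x, y) \<in> fr I" and xz: "(x, z) \<in> fr I"
  then have "card {j. (x, j) \<in> fr I} \<le> 1"
    using matching fr_agents by auto
  with xy xz show "y = z"
    using card_le_Suc0_iff_eq [OF finite_friends] by auto
qed

lemma friends_eq: "(x, y) \<in> fr I \<Longrightarrow> {j. (x, j) \<in> fr I} = {y}"
  using friend_unique by auto

lemma card_friends_le_1: "card {j. (i, j) \<in> fr I} \<le> 1"
proof (cases "i \<in> agents I")
  case False
  then have "{j. (i, j) \<in> fr I} = {}" using fr_agents by auto
  then show ?thesis by simp
qed (use matching in auto)

lemma finite_free: "finite (free I h)"
  unfolding free_def using finite_plots by auto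

lemma util_nonneg: "0 \<le> util I A i"
  unfolding util_def using val_nonneg phi_pos by (intro add_nonneg_nonneg sum_nonneg) auto

lemma util_le: "util I A i \<le> 1 + phi I"
proof -
  have "(\<Sum>j\<in>{j. (i, j) \<in> fr I}. phi I * (if adj I (A i) (A j) then 1 else 0))
      \<le> (\<Sum>j\<in>{j. (i, j) \<in> fr I}. phi I)"
    by (rule sum_mono) (use phi_pos in auto)
  also have "\<dots> \<le> phi I"
    using card_friends_le_1 [of i] phi_pos by simp
  finally show ?thesis
    unfolding util_def using val_le_1 [of i "A i"] by linarith
qed

lemma abs_SW_le: "\<bar>SW I A\<bar> \<le> card (agents I) * (1 + phi I)"
proof -
  have "0 \<le> SW I A"
    unfolding SW_def by (intro sum_nonneg util_nonneg)
  moreover have "SW I A \<le> (\<Sum>i \<in> agents I. 1 + phi I)"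
    unfolding SW_def by (intro sum_mono util_le)
  ultimately show ?thesis by simp
qed

lemma util_ge_phi_if_adj:
  "(i, j) \<in> fr I \<Longrightarrow> adj I (A i) (A j) \<Longrightarrow> phi I \<le> util I A i"
  unfolding util_def using friends_eq val_nonneg [of i "A i"] by simp

lemma util_ge_pval:
  assumes "\<And>k w. map_of h k = Some w \<Longrightarrow> A k = w"
  shows "pval I h i (A i) \<le> util I A i"
proof -
  define F where "F = {k. (i, k) \<in> fr I}"
  define S where "S = {k. (i, k) \<in> fr I \<and> (\<exists>w. map_of h k = Some w \<and> adj I (A i) w)}"
  have "(\<Sum>k\<in>S. phi I * (if adj I (A i) (A k) then 1 else 0)) = (\<Sum>k\<in>S. phi I)"
    by (rule sum.cong) (auto simp: S_def dest: assms)
  then have "phi I * real (card S) = (\<Sum>k\<in>S. phi I * (if adj I (A i) (A k) then 1 else 0))"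
    by simp
  also have "\<dots> \<le> (\<Sum>k\<in>F. phi I * (if adj I (A i) (A k) then 1 else 0))"
    unfolding S_def F_def using finite_friends phi_pos by (intro sum_mono2) auto
  finally show ?thesis
    unfolding pval_def util_def S_def F_def by simp
qed

lemma pval_single_friend:
  assumes "(k, m) \<in> fr I" and "map_of h m = Some z"
  shows "pval I h k u = val I k u + phi I * (if adj I u z then 1 else 0)"
proof -
  have "{j. (k, j) \<in> fr I \<and> (\<exists>w. map_of h j = Some w \<and> adj I u w)} = (if adj I u z then {m} else {})"
  proof -
    have "(k, j) \<in> fr I \<longleftrightarrow> j = m" for j
      using assms(1) friend_unique by blast
    then show ?thesis using assms(2) by auto
  qed
  then show ?thesis unfolding pval_def by simp
qed

lemma card_fr_meeting:
  assumes "finite Q"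
  shows "card {z \<in> fr I. fst z \<in> Q \<or> snd z \<in> Q} \<le> 2 * card Q"
proof -
  let ?X = "{z \<in> fr I. fst z \<in> Q}" and ?Y = "{z \<in> fr I. snd z \<in> Q}"
  have X: "card ?X \<le> card Q"
  proof (rule card_inj_on_le [OF _ _ assms])
    show "inj_on fst ?X"
      by (rule inj_onI) (auto dest: friend_unique)
  qed auto
  have Y: "card ?Y \<le> card Q"
  proof (rule card_inj_on_le [OF _ _ assms])
    show "inj_on snd ?Y"
      by (rule inj_onI) (auto intro: friend_unique [OF fr_sym fr_sym])
  qed auto
  have "card {z \<in> fr I. fst z \<in> Q \<or> snd z \<in> Q} = card (?X \<union> ?Y)"
    by (rule arg_cong [where f = card]) auto
  then show ?thesis
    using X Y card_Un_le [of ?X ?Y] by linarith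
qed

definition unplaced_welfare :: "('a \<Rightarrow> 'v) \<Rightarrow> ('a, 'v) hist \<Rightarrow> real" where
  "unplaced_welfare A h = (\<Sum>i \<in> agents I - placed h. util I A i)"

lemma unplaced_welfare_nonneg: "0 \<le> unplaced_welfare A h"
  unfolding unplaced_welfare_def by (intro sum_nonneg util_nonneg)

lemma unplaced_welfare_append:
  assumes "fst ` set ys \<subseteq> agents I - placed h"
  shows "unplaced_welfare A h = (\<Sum>i \<in> fst ` set ys. util I A i) + unplaced_welfare A (h @ ys)"
proof -
  have "agents I - placed (h @ ys) = (agents I - placed h) - fst ` set ys" by auto
  then show ?thesis
    unfolding unplaced_welfare_def using sum.subset_diff [OF assms] finite_agents
    by (simp add: add.commute)
qed

lemma finite_open_pairs: "finite (open_pairs I h)"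
proof (rule finite_subset [OF _ finite_Pow_iff [THEN iffD2, OF finite_agents]])
  show "open_pairs I h \<subseteq> Pow (agents I)"
    unfolding open_pairs_def using fr_agents by auto
qed

lemma friend_pair_eq:
  assumes ij: "(i, j) \<in> fr I" and ab: "(a, b) \<in> fr I" and "a \<in> {i, j} \<or> b \<in> {i, j}"
  shows "{a, b} = {i, j}"
proof -
  have ji: "(j, i) \<in> fr I" and ba: "(b, a) \<in> fr I"
    using ij ab fr_sym by blast+
  from assms(3) consider "a = i" | "a = j" | "b = i" | "b = j" by blast
  then show ?thesis
  proof cases
    case 1
    then show ?thesis using friend_unique [OF ij] ab by auto
  next
    case 2
    then show ?thesis using friend_unique [OF ji] ab by auto
  next
    case 3
    then show ?thesis using friend_unique [OF ij] ba by auto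
  next
    case 4
    then show ?thesis using friend_unique [OF ji] ba by auto
  qed
qed

lemma open_pairs_pair_step:
  assumes ij: "(i, j) \<in> fr I"
  shows "open_pairs I (h @ [(i, v), (j, w)]) = open_pairs I h - {{i, j}}"
proof (intro set_eqI iffI)
  fix p assume "p \<in> open_pairs I (h @ [(i, v), (j, w)])"
  then obtain a b where "p = {a, b}" "(a, b) \<in> fr I" "a \<notin> placed h" "b \<notin> placed h"
    "a \<notin> {i, j}" "b \<notin> {i, j}"
    unfolding open_pairs_def by auto
  then show "p \<in> open_pairs I h - {{i, j}}"
    unfolding open_pairs_def by auto
next
  fix p assume "p \<in> open_pairs I h - {{i, j}}"
  then obtain a b where p: "p = {a, b}" "(a, b) \<in> fr I" "a \<notin> placed h" "b \<notin> placed h"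
    and "p \<noteq> {i, j}"
    unfolding open_pairs_def by auto
  then have "a \<notin> {i, j}" "b \<notin> {i, j}"
    using friend_pair_eq [OF ij p(2)] by blast+
  with p show "p \<in> open_pairs I (h @ [(i, v), (j, w)])"
    unfolding open_pairs_def by auto
qed

lemma pair_step_eq:
  assumes "p \<in> open_pairs I h" "i \<in> p"
  obtains j where "p = {i, j}" "(i, j) \<in> fr I" "i \<notin> placed h" "j \<notin> placed h"
    "pair_step \<pi> h p i = h @ [(i, pf \<pi> h i j), (j, ps \<pi> (h @ [(i, pf \<pi> h i j)]) j)]"
proof -
  obtain j where j: "p = {i, j}" "(i, j) \<in> fr I" "i \<notin> placed h" "j \<notin> placed h"
    using assms fr_sym unfolding open_pairs_def by (auto simp: insert_commute)
  moreover have "(THE j'. j' \<in> p \<and> j' \<noteq> i) = j"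
    using j fr_irrefl by (intro the_equality) auto
  ultimately show ?thesis
    using that unfolding pair_step_def Let_def by simp
qed

lemma truthful_report_eq: "truthful_report I i = Some j \<longleftrightarrow> (i, j) \<in> fr I"
  unfolding truthful_report_def using friend_unique by (auto intro: theI2)

lemma mutual_pairs_truthful: "mutual_pairs I (truthful_report I) = open_pairs I []"
proof -
  have "(\<exists>i j. p = {i, j} \<and> i \<in> agents I \<and> j \<in> agents I \<and> i \<noteq> j
            \<and> (i, j) \<in> fr I \<and> (j, i) \<in> fr I)
    \<longleftrightarrow> (\<exists>a b. p = {a, b} \<and> (a, b) \<in> fr I)" for p
    using fr_agents fr_sym fr_irrefl by blast
  then show ?thesis
    unfolding mutual_pairs_def open_pairs_def truthful_report_eq by simp
qed

end

locale binary_matching_run = binary_matching_inst I for I :: "('a, 'v) inst" +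
  fixes \<pi> :: "('a, 'v) policy"
  assumes um: "utility_maximizing I \<pi>"
begin

lemma BR_nonempty: "free I h \<noteq> {} \<Longrightarrow> BR I h k \<noteq> {}"
  unfolding BR_def using exists_maximizer [OF finite_free] by blast

lemma BR1_nonempty: "free I h \<noteq> {} \<Longrightarrow> BR1 I h i j \<noteq> {}"
  unfolding BR1_def using exists_maximizer [OF finite_free] by blast

lemma pf_BR1: "free I h \<noteq> {} \<Longrightarrow> pf \<pi> h i j \<in> BR1 I h i j"
  using um BR1_nonempty [of h i j] unfolding utility_maximizing_def by simp

lemma ps_BR: "free I h \<noteq> {} \<Longrightarrow> ps \<pi> h j \<in> BR I h j"
  using um BR_nonempty [of h j] unfolding utility_maximizing_def by simp

lemma pr_BR: "free I h \<noteq> {} \<Longrightarrow> pr \<pi> h j \<in> BR I h j"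
  using um BR_nonempty [of h j] unfolding utility_maximizing_def by simp

lemma best_response_adj_friend:
  assumes "(j, i) \<in> fr I" "map_of h i = Some x" "y \<in> free I h" "adj I x y" "w \<in> BR I h j"
  shows "adj I x w"
proof (rule ccontr)
  assume "\<not> adj I x w"
  then have "pval I h j w \<le> 1"
    using pval_single_friend [OF assms(1,2)] val_le_1 adj_sym by fastforce
  moreover have "phi I \<le> pval I h j y"
    using pval_single_friend [OF assms(1,2)] val_nonneg assms(4) adj_sym by fastforce
  moreover have "pval I h j y \<le> pval I h j w"
    using assms(3,5) unfolding BR_def by blast
  ultimately show False
    using phi_gt_1 by linarith
qed

text \<open>The friend answers next to \<open>x\<close> whenever some free plot next to \<open>x\<close> remains, so all
  its best responses give the first picker the same utility.\<close>
lemma fval_eq: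
  assumes ij: "(i, j) \<in> fr I" and unplaced: "i \<notin> placed h" "j \<notin> placed h"
    and nonempty: "free I (h @ [(i, x)]) \<noteq> {}"
  shows "fval I h i j x = val I i x + phi I * (if \<exists>y \<in> free I (h @ [(i, x)]). adj I x y then 1 else 0)"
    (is "_ = ?c")
proof -
  let ?h1 = "h @ [(i, x)]"
  have "i \<noteq> j" using ij fr_irrefl by auto
  then have "pval I (?h1 @ [(j, w)]) i x = val I i x + phi I * (if adj I x w then 1 else 0)" for w
    using unplaced by (intro pval_single_friend [OF ij]) (simp add: map_of_unplaced map_add_def)
  moreover have "(if adj I x w then 1 else 0) = (if \<exists>y \<in> free I ?h1. adj I x y then 1 else (0::real))"
    if "w \<in> BR I ?h1 j" for w
  proof (cases "\<exists>y \<in> free I ?h1. adj I x y")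
    case True
    have "map_of ?h1 i = Some x"
      using unplaced by (simp add: map_of_unplaced map_add_def)
    with True have "adj I x w"
      using best_response_adj_friend [OF fr_sym [OF ij]] that by blast
    then show ?thesis using True by simp
  next
    case False
    moreover have "w \<in> free I ?h1"
      using that unfolding BR_def by blast
    ultimately show ?thesis by auto
  qed
  ultimately have "fval I h i j x = (MIN w \<in> BR I ?h1 j. ?c)"
    unfolding fval_def by (intro arg_cong [where f = Min] image_cong) auto
  also have "\<dots> = ?c"
    using BR_nonempty [OF nonempty] finite_free by (intro Min_const) (auto simp: BR_def)
  finally show ?thesis .
qed

lemma pair_picks_adjacent:
  assumes afp: "adj_free_pair I h" and ij: "(i, j) \<in> fr I"
    and unplaced: "i \<notin> placed h" "j \<notin> placed h"
  shows "adj I (pf \<pi> h i j) (ps \<pi> (h @ [(i, pf \<pi> h i j)]) j)"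
proof -
  from afp obtain x y where xy: "x \<in> free I h" "y \<in> free I h" "adj I x y"
    unfolding adj_free_pair_def by auto
  have "y \<noteq> x" using xy adj_irrefl by auto
  then have nonempty: "free I (h @ [(i, z)]) \<noteq> {}" for z
    using xy by auto
  define v where "v = pf \<pi> h i j"
  have v: "v \<in> free I h" "fval I h i j x \<le> fval I h i j v"
    using pf_BR1 xy unfolding v_def BR1_def by blast+
  have "phi I \<le> fval I h i j x"
    using fval_eq [OF ij unplaced nonempty] xy \<open>y \<noteq> x\<close> val_nonneg [of i x] by auto
  have "\<exists>y' \<in> free I (h @ [(i, v)]). adj I v y'"
  proof (rule ccontr)
    assume "\<not> ?thesis"
    then have "fval I h i j v \<le> 1"
      using fval_eq [OF ij unplaced nonempty] val_le_1 [of i v] by simp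
    then show False
      using \<open>phi I \<le> fval I h i j x\<close> v(2) phi_gt_1 by linarith
  qed
  then obtain y' where "y' \<in> free I (h @ [(i, v)])" "adj I v y'" by blast
  moreover have "map_of (h @ [(i, v)]) i = Some v"
    using unplaced by (simp add: map_of_unplaced map_add_def)
  ultimately show ?thesis
    using best_response_adj_friend [OF fr_sym [OF ij]] ps_BR [OF nonempty] unfolding v_def by blast
qed

lemma rsd_pick_value:
  assumes "i \<in> rsd_candidates I h"
  shows "1 \<le> pval I h i (pr \<pi> h i)"
proof -
  obtain u where u: "u \<in> free I h" "val I i u = 1"
    using assms val_cases unfolding rsd_candidates_def by force
  then have "pval I h i u \<le> pval I h i (pr \<pi> h i)"
    using pr_BR unfolding BR_def by blast
  moreover have "val I i u \<le> pval I h i u"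
    unfolding pval_def using phi_pos by simp
  ultimately show ?thesis using u by linarith
qed

end

locale binary_matching_opt = binary_matching_inst I for I :: "('a, 'v) inst" +
  fixes As :: "'a \<Rightarrow> 'v"
  assumes As_alloc: "As \<in> allocations I"
begin

lemma As_inj: "inj_on As (agents I)" and As_plots: "As ` agents I = plots I"
  using As_alloc unfolding allocations_def bij_betw_def by auto

definition intact :: "('a, 'v) hist \<Rightarrow> 'a set" where
  "intact h = {x \<in> agents I - placed h. As x \<in> free I h}"

definition intact_value :: "('a, 'v) hist \<Rightarrow> real" where
  "intact_value h = (\<Sum>x \<in> intact h. val I x (As x))"

definition bonds :: "('a \<times> 'a) set" where
  "bonds = {(x, y) \<in> fr I. adj I (As x) (As y)}"

definition unplaced_bonds :: "('a, 'v) hist \<Rightarrow> nat" where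
  "unplaced_bonds h = card {(x, y) \<in> bonds. x \<notin> placed h \<and> y \<notin> placed h}"

definition free_bonds :: "('a, 'v) hist \<Rightarrow> nat" where
  "free_bonds h = card {(x, y) \<in> bonds. As x \<in> free I h \<and> As y \<in> free I h}"

definition potential :: "('a, 'v) hist \<Rightarrow> real" where
  "potential h = intact_value h + phi I * min (unplaced_bonds h) (free_bonds h)"

lemma finite_bonds: "finite bonds"
  unfolding bonds_def by (rule finite_subset [OF _ finite_fr]) auto

lemma card_As_preimage: "card {x \<in> agents I. As x \<in> snd ` set ys} \<le> length ys"
proof -
  have "card {x \<in> agents I. As x \<in> snd ` set ys} \<le> card (snd ` set ys)"
    using As_inj by (intro card_inj_on_le) (auto intro: inj_on_subset)
  also have "\<dots> \<le> length ys"
    by (rule card_image_set_le_length)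
  finally show ?thesis .
qed

lemma intact_value_drop: "intact_value h \<le> intact_value (h @ ys) + 2 * length ys"
proof -
  let ?D = "intact h - intact (h @ ys)"
  have sub: "intact (h @ ys) \<subseteq> intact h" and fin: "finite (intact h)"
    unfolding intact_def using finite_agents by auto
  have "intact_value h = intact_value (h @ ys) + (\<Sum>x \<in> ?D. val I x (As x))"
    unfolding intact_value_def using sum.subset_diff [OF sub fin] by (simp add: add.commute)
  moreover have "(\<Sum>x \<in> ?D. val I x (As x)) \<le> card ?D"
    using sum_bounded_above [of ?D "\<lambda>x. val I x (As x)" 1] val_le_1 by simp
  moreover have "?D \<subseteq> fst ` set ys \<union> {x \<in> agents I. As x \<in> snd ` set ys}"
    unfolding intact_def by auto
  then have "card ?D \<le> card (fst ` set ys \<union> {x \<in> agents I. As x \<in> snd ` set ys})"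
    using finite_agents by (intro card_mono) auto
  then have "card ?D \<le> card (fst ` set ys) + card {x \<in> agents I. As x \<in> snd ` set ys}"
    using card_Un_le order_trans by blast
  ultimately show ?thesis
    using card_image_set_le_length [of fst ys] card_As_preimage [of ys] by linarith
qed

lemma unplaced_bonds_drop: "unplaced_bonds h \<le> unplaced_bonds (h @ ys) + 2 * length ys"
proof -
  let ?A = "{(x, y) \<in> bonds. x \<notin> placed h \<and> y \<notin> placed h}"
  let ?B = "{(x, y) \<in> bonds. x \<notin> placed (h @ ys) \<and> y \<notin> placed (h @ ys)}"
  let ?M = "{z \<in> fr I. fst z \<in> fst ` set ys \<or> snd z \<in> fst ` set ys}"
  have "card ?A \<le> card ?B + card (?A - ?B)"
    using finite_bonds by (intro card_le_add_card_Diff) (auto intro: finite_subset)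
  moreover have "card (?A - ?B) \<le> card ?M"
    using finite_fr by (intro card_mono) (force simp: bonds_def)+
  ultimately show ?thesis
    unfolding unplaced_bonds_def using card_fr_meeting [of "fst ` set ys"] card_image_set_le_length [of fst ys]
    by simp
qed

lemma free_bonds_drop: "free_bonds h \<le> free_bonds (h @ ys) + 2 * length ys"
proof -
  let ?Q = "{x \<in> agents I. As x \<in> snd ` set ys}"
  let ?A = "{(x, y) \<in> bonds. As x \<in> free I h \<and> As y \<in> free I h}"
  let ?B = "{(x, y) \<in> bonds. As x \<in> free I (h @ ys) \<and> As y \<in> free I (h @ ys)}"
  let ?M = "{z \<in> fr I. fst z \<in> ?Q \<or> snd z \<in> ?Q}"
  have "card ?A \<le> card ?B + card (?A - ?B)"
    using finite_bonds by (intro card_le_add_card_Diff) (auto intro: finite_subset)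
  moreover have "card (?A - ?B) \<le> card ?M"
    using finite_fr fr_agents by (intro card_mono) (force simp: bonds_def)+
  ultimately show ?thesis
    unfolding free_bonds_def using card_fr_meeting [of ?Q] card_As_preimage [of ys] finite_agents
    by simp
qed

lemma min_bonds_mono:
  "min (unplaced_bonds (h @ ys)) (free_bonds (h @ ys)) \<le> min (unplaced_bonds h) (free_bonds h)"
proof -
  have "unplaced_bonds (h @ ys) \<le> unplaced_bonds h" "free_bonds (h @ ys) \<le> free_bonds h"
    unfolding unplaced_bonds_def free_bonds_def
    by (intro card_mono finite_subset [OF _ finite_bonds]; auto)+
  then show ?thesis by (rule min.mono)
qed

lemma potential_drop: "potential h \<le> potential (h @ ys) + 2 * (1 + phi I) * length ys"
proof -
  have "min (unplaced_bonds h) (free_bonds h)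
      \<le> min (unplaced_bonds (h @ ys)) (free_bonds (h @ ys)) + 2 * length ys"
    using unplaced_bonds_drop [of h ys] free_bonds_drop [of h ys] by simp
  then have "phi I * min (unplaced_bonds h) (free_bonds h)
      \<le> phi I * (min (unplaced_bonds (h @ ys)) (free_bonds (h @ ys)) + 2 * length ys)"
    using phi_pos by (intro mult_left_mono) simp_all
  then show ?thesis
    unfolding potential_def using intact_value_drop [of h ys] by (simp add: algebra_simps)
qed

lemma potential_Nil: "potential [] = SW I As"
proof -
  have intact: "intact [] = agents I"
    unfolding intact_def using As_plots by auto
  have unplaced: "unplaced_bonds [] = card bonds"
    unfolding unplaced_bonds_def by simp
  have free: "free_bonds [] = card bonds"
    unfolding free_bonds_def bonds_def using As_plots fr_agents
    by (intro arg_cong [where f = card]) auto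
  have bonds_of: "(\<Sum>j \<in> {j. (i, j) \<in> fr I}. phi I * (if adj I (As i) (As j) then 1 else 0))
      = phi I * card {j. (i, j) \<in> fr I \<and> adj I (As i) (As j)}" for i
  proof -
    have "(\<Sum>j \<in> {j. (i, j) \<in> fr I}. if adj I (As i) (As j) then 1 else 0)
        = (\<Sum>j \<in> {j. (i, j) \<in> fr I \<and> adj I (As i) (As j)}. (1::real))"
      using sum.inter_filter [OF finite_friends [of i], of "\<lambda>_. 1::real" "\<lambda>j. adj I (As i) (As j)"]
      by simp
    then show ?thesis by (simp add: sum_distrib_left [symmetric])
  qed
  have "bonds = Sigma (agents I) (\<lambda>i. {j. (i, j) \<in> fr I \<and> adj I (As i) (As j)})"
    unfolding bonds_def using fr_agents by auto
  then have "card bonds = (\<Sum>i \<in> agents I. card {j. (i, j) \<in> fr I \<and> adj I (As i) (As j)})"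
    using finite_agents finite_friends by (simp add: card_SigmaI)
  then show ?thesis
    unfolding potential_def intact_value_def intact unplaced free SW_def util_def bonds_of
    by (simp add: sum.distrib sum_distrib_left)
qed

lemma intact_value_le_potential: "intact_value h \<le> potential h"
  unfolding potential_def using phi_pos by simp

lemma potential_nonpos:
  assumes "min (unplaced_bonds h) (free_bonds h) = 0" and "rsd_candidates I h = {}"
  shows "potential h \<le> 0"
proof -
  have "val I x (As x) \<le> 0" if "x \<in> intact h" for x
    using that assms(2) unfolding intact_def rsd_candidates_def by (auto simp: not_less)
  then have "intact_value h \<le> 0"
    unfolding intact_value_def by (rule sum_nonpos)
  then show ?thesis
    unfolding potential_def using assms(1) by simp
qed

lemma potential_all_placed: "agents I \<subseteq> placed h \<Longrightarrow> potential h \<le> 0"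
proof (rule potential_nonpos)
  assume "agents I \<subseteq> placed h"
  then have "{(x, y) \<in> bonds. x \<notin> placed h \<and> y \<notin> placed h} = {}"
    unfolding bonds_def using fr_agents by blast
  then have "unplaced_bonds h = 0"
    unfolding unplaced_bonds_def by (simp only: card.empty)
  then show "min (unplaced_bonds h) (free_bonds h) = 0" by simp
  show "rsd_candidates I h = {}"
    using \<open>agents I \<subseteq> placed h\<close> unfolding rsd_candidates_def by auto
qed

text \<open>\<open>P\<close> holds the pairs still to be processed; after the switch to RSD* it is empty and the
  second disjunct takes over.\<close>
definition run_inv :: "nat \<Rightarrow> ('a, 'v) hist \<Rightarrow> 'a set set \<Rightarrow> bool" where
  "run_inv n h P \<longleftrightarrow> placed h \<subseteq> agents I \<and> card (agents I) \<le> card (placed h) + n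
     \<and> P \<subseteq> open_pairs I h
     \<and> (open_pairs I h \<subseteq> P \<or> min (unplaced_bonds h) (free_bonds h) = 0)"

lemma run_inv_init: "run_inv (card (agents I)) [] (mutual_pairs I (truthful_report I))"
  unfolding run_inv_def mutual_pairs_truthful by simp

lemma run_inv_0_all_placed:
  assumes "run_inv 0 h P"
  shows "agents I \<subseteq> placed h"
proof -
  have "placed h \<subseteq> agents I" "card (agents I) \<le> card (placed h)"
    using assms unfolding run_inv_def by auto
  then show ?thesis
    by (metis card_mono card_subset_eq finite_agents le_antisym order_refl)
qed

lemma run_inv_min_bonds_0:
  assumes "run_inv n h P" and "\<not> (adj_free_pair I h \<and> P \<noteq> {})"
  shows "min (unplaced_bonds h) (free_bonds h) = 0"
proof (cases "adj_free_pair I h")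
  case False
  then have "{(x, y) \<in> bonds. As x \<in> free I h \<and> As y \<in> free I h} = {}"
    unfolding adj_free_pair_def bonds_def by auto
  then have "free_bonds h = 0"
    unfolding free_bonds_def by (simp only: card.empty)
  then show ?thesis by simp
next
  case True
  with assms have "open_pairs I h = {} \<or> min (unplaced_bonds h) (free_bonds h) = 0"
    unfolding run_inv_def by auto
  then show ?thesis
  proof
    assume "open_pairs I h = {}"
    then have "{(x, y) \<in> bonds. x \<notin> placed h \<and> y \<notin> placed h} = {}"
      unfolding open_pairs_def bonds_def by auto
    then have "unplaced_bonds h = 0"
      unfolding unplaced_bonds_def by (simp only: card.empty)
    then show ?thesis by simp
  qed
qed

lemma run_inv_pair_step:
  assumes inv: "run_inv (Suc n) h P" and ij: "(i, j) \<in> fr I" and "{i, j} \<in> P"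
    and unplaced: "i \<notin> placed h"
  shows "run_inv n (h @ [(i, v), (j, w)]) (P - {{i, j}})"
proof -
  let ?h2 = "h @ [(i, v), (j, w)]"
  have placed_sub: "placed h \<subseteq> agents I" and fuel: "card (agents I) \<le> card (placed h) + Suc n"
    and P_sub: "P \<subseteq> open_pairs I h"
    and cover: "open_pairs I h \<subseteq> P \<or> min (unplaced_bonds h) (free_bonds h) = 0"
    using inv unfolding run_inv_def by auto
  have placed2: "placed ?h2 = insert i (insert j (placed h))" by auto
  then have placed2_sub: "placed ?h2 \<subseteq> agents I"
    using ij fr_agents placed_sub by auto
  have "Suc (card (placed h)) = card (insert i (placed h))"
    using unplaced finite_subset [OF placed_sub finite_agents] by simp
  also have "\<dots> \<le> card (placed ?h2)"
    using placed2 placed2_sub finite_subset [OF _ finite_agents] by (intro card_mono) auto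
  finally have "card (agents I) \<le> card (placed ?h2) + n"
    using fuel by linarith
  moreover have "P - {{i, j}} \<subseteq> open_pairs I ?h2"
    using P_sub unfolding open_pairs_pair_step [OF ij] by auto
  moreover have "open_pairs I ?h2 \<subseteq> P - {{i, j}} \<or> min (unplaced_bonds ?h2) (free_bonds ?h2) = 0"
    using cover min_bonds_mono [of h "[(i, v), (j, w)]"] unfolding open_pairs_pair_step [OF ij] by auto
  ultimately show ?thesis
    unfolding run_inv_def using placed2_sub by blast
qed

lemma run_inv_rsd_step:
  assumes inv: "run_inv (Suc n) h P" and min0: "min (unplaced_bonds h) (free_bonds h) = 0"
    and i: "i \<in> agents I - placed h"
  shows "run_inv n (h @ [(i, v)]) {}"
proof -
  let ?h2 = "h @ [(i, v)]"
  have placed_sub: "placed h \<subseteq> agents I" and fuel: "card (agents I) \<le> card (placed h) + Suc n"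
    using inv unfolding run_inv_def by auto
  have placed2: "placed ?h2 = insert i (placed h)" by auto
  then have "placed ?h2 \<subseteq> agents I"
    using i placed_sub by auto
  moreover have "card (placed ?h2) = Suc (card (placed h))"
    using placed2 i finite_subset [OF placed_sub finite_agents] by simp
  moreover have "min (unplaced_bonds ?h2) (free_bonds ?h2) = 0"
    using min0 min_bonds_mono [of h "[(i, v)]"] by simp
  ultimately show ?thesis
    unfolding run_inv_def using fuel by simp
qed

end

locale binary_matching_mech =
  binary_matching_run I \<pi> + binary_matching_opt I As
  for I :: "('a, 'v) inst" and \<pi> :: "('a, 'v) policy" and As :: "'a \<Rightarrow> 'v"
begin

lemma pair_round:
  assumes inv: "run_inv (Suc n) h P" and afp: "adj_free_pair I h" and p: "p \<in> P" "i \<in> p"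
    and A: "A \<in> set_pmf (run I \<pi> n (pair_step \<pi> h p i) (P - {p}))"
  shows "run_inv n (pair_step \<pi> h p i) (P - {p})"
    and "potential h - 4 * unplaced_welfare A h
      \<le> potential (pair_step \<pi> h p i) - 4 * unplaced_welfare A (pair_step \<pi> h p i)"
proof -
  have "p \<in> open_pairs I h"
    using inv p unfolding run_inv_def by auto
  then obtain j where pij: "p = {i, j}" and ij: "(i, j) \<in> fr I"
    and unplaced: "i \<notin> placed h" "j \<notin> placed h"
    and step: "pair_step \<pi> h p i = h @ [(i, pf \<pi> h i j), (j, ps \<pi> (h @ [(i, pf \<pi> h i j)]) j)]"
    using p(2) by (rule pair_step_eq)
  define v where "v = pf \<pi> h i j"
  define w where "w = ps \<pi> (h @ [(i, v)]) j"
  have step': "pair_step \<pi> h p i = h @ [(i, v), (j, w)]"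
    using step unfolding v_def w_def .
  show "run_inv n (pair_step \<pi> h p i) (P - {p})"
    unfolding step' using run_inv_pair_step [OF inv ij _ unplaced(1)] p(1) pij by simp
  have "i \<noteq> j"
    using ij fr_irrefl by auto
  then have "map_of (h @ [(i, v), (j, w)]) i = Some v" "map_of (h @ [(i, v), (j, w)]) j = Some w"
    using unplaced by (simp_all add: map_of_unplaced map_add_def)
  then have "A i = v" "A j = w"
    using run_extends_history [OF A [unfolded step']] by auto
  moreover have "adj I v w"
    unfolding v_def w_def by (rule pair_picks_adjacent [OF afp ij unplaced])
  ultimately have "phi I \<le> util I A i" "phi I \<le> util I A j"
    using util_ge_phi_if_adj [OF ij] util_ge_phi_if_adj [OF fr_sym [OF ij]] adj_sym by auto
  moreover have
    "unplaced_welfare A h = util I A i + util I A j + unplaced_welfare A (h @ [(i, v), (j, w)])"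
    using unplaced_welfare_append [of "[(i, v), (j, w)]" h A] ij fr_agents unplaced \<open>i \<noteq> j\<close> by auto
  moreover have "potential h \<le> potential (h @ [(i, v), (j, w)]) + 4 + 4 * phi I"
    using potential_drop [of h "[(i, v), (j, w)]"] by (simp add: algebra_simps)
  ultimately show "potential h - 4 * unplaced_welfare A h
      \<le> potential (pair_step \<pi> h p i) - 4 * unplaced_welfare A (pair_step \<pi> h p i)"
    unfolding step' using phi_gt_1 by linarith
qed

lemma rsd_round:
  assumes inv: "run_inv (Suc n) h P" and stuck: "\<not> (adj_free_pair I h \<and> P \<noteq> {})"
    and i: "i \<in> rsd_candidates I h"
    and A: "A \<in> set_pmf (run I \<pi> n (h @ [(i, pr \<pi> h i)]) {})"
  shows "run_inv n (h @ [(i, pr \<pi> h i)]) {}"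
    and "potential h - 4 * unplaced_welfare A h
      \<le> potential (h @ [(i, pr \<pi> h i)]) - 4 * unplaced_welfare A (h @ [(i, pr \<pi> h i)])"
proof -
  let ?h2 = "h @ [(i, pr \<pi> h i)]"
  have min0: "min (unplaced_bonds h) (free_bonds h) = 0"
    by (rule run_inv_min_bonds_0 [OF inv stuck])
  have i': "i \<in> agents I - placed h"
    using i unfolding rsd_candidates_def by auto
  show "run_inv n ?h2 {}"
    by (rule run_inv_rsd_step [OF inv min0 i'])
  have "A k = w" if "map_of h k = Some w" for k w
    using run_extends_history [OF A] that by (simp add: map_add_def)
  then have "pval I h i (A i) \<le> util I A i"
    by (rule util_ge_pval)
  moreover have "A i = pr \<pi> h i"
    using run_extends_history [OF A] i' by (simp add: map_of_unplaced map_add_def)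
  ultimately have "1 \<le> util I A i"
    using rsd_pick_value [OF i] by simp
  moreover have "unplaced_welfare A h = util I A i + unplaced_welfare A ?h2"
    using unplaced_welfare_append [of "[(i, pr \<pi> h i)]" h A] i' by simp
  moreover have "potential h \<le> potential ?h2 + 2"
    using min0 intact_value_drop [of h "[(i, pr \<pi> h i)]"] intact_value_le_potential [of ?h2]
    unfolding potential_def by simp
  ultimately show "potential h - 4 * unplaced_welfare A h \<le> potential ?h2 - 4 * unplaced_welfare A ?h2"
    by linarith
qed

lemma potential_le_unplaced_welfare:
  "run_inv n h P \<Longrightarrow> A \<in> set_pmf (run I \<pi> n h P) \<Longrightarrow> potential h \<le> 4 * unplaced_welfare A h"
proof (induction n arbitrary: h P)
  case 0
  then have "potential h \<le> 0"
    using potential_all_placed run_inv_0_all_placed by blast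
  then show ?case
    using unplaced_welfare_nonneg [of A h] by linarith
next
  case (Suc n)
  consider (pair) "adj_free_pair I h \<and> P \<noteq> {}"
    | (rsd) "\<not> (adj_free_pair I h \<and> P \<noteq> {})" "rsd_candidates I h \<noteq> {}"
    | (stop) "\<not> (adj_free_pair I h \<and> P \<noteq> {})" "rsd_candidates I h = {}"
    by blast
  then show ?case
  proof cases
    case pair
    have "P \<subseteq> open_pairs I h"
      using Suc.prems(1) unfolding run_inv_def by simp
    then have "finite P" and "\<forall>p \<in> P. finite p \<and> p \<noteq> {}"
      using finite_open_pairs by (auto intro: finite_subset simp: open_pairs_def)
    with Suc.prems(2) pair obtain p i where p: "p \<in> P" "i \<in> p"
      and A: "A \<in> set_pmf (run I \<pi> n (pair_step \<pi> h p i) (P - {p}))"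
      by (auto simp: run_Suc_pair)
    then show ?thesis
      using Suc.IH pair_round [OF Suc.prems(1)] pair by fastforce
  next
    case rsd
    have "finite (rsd_candidates I h)"
      unfolding rsd_candidates_def using finite_agents by simp
    with Suc.prems(2) rsd obtain i where i: "i \<in> rsd_candidates I h"
      and A: "A \<in> set_pmf (run I \<pi> n (h @ [(i, pr \<pi> h i)]) {})"
      by (auto simp: run_Suc_rsd)
    then show ?thesis
      using Suc.IH rsd_round [OF Suc.prems(1) rsd(1)] by fastforce
  next
    case stop
    then have "potential h \<le> 0"
      using potential_nonpos run_inv_min_bonds_0 [OF Suc.prems(1)] by blast
    then show ?thesis
      using unplaced_welfare_nonneg [of A h] by linarith
  qed
qed

lemma SW_le_4_SW_outcome:
  "A \<in> set_pmf (FF_CT_RSD I (truthful_report I) \<pi>) \<Longrightarrow> SW I As \<le> 4 * SW I A"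
  using potential_le_unplaced_welfare [OF run_inv_init, of A]
  unfolding FF_CT_RSD_def potential_Nil unplaced_welfare_def SW_def by simp

end

theorem theorem5p2:
  fixes I :: "('a, 'v) inst" and \<pi> :: "('a, 'v) policy"
  assumes "wf_inst I"
    and "binary I"
    and "phi I > 1"
    and "max_degree_one I"
    and "utility_maximizing I \<pi>"
  shows "measure_pmf.expectation (FF_CT_RSD I (truthful_report I) \<pi>) (SW I) \<ge> OPT I / 4"
proof -
  \<comment> \<open>only the degree bound of \<open>max_degree_one\<close> is needed, not that some friendship exists\<close>
  have "\<forall>i \<in> agents I. card {j. (i, j) \<in> fr I} \<le> 1"
    using assms(4) unfolding max_degree_one_def by blast
  then interpret binary_matching_run I \<pi>
    using assms by unfold_locales auto
  obtain As where As: "As \<in> allocations I" "SW I As = OPT I"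
    using OPT_attained [OF assms(1)] .
  then interpret binary_matching_mech I \<pi> As
    by unfold_locales auto
  show ?thesis
  proof (rule expectation_ge_of_support [OF abs_SW_le])
    fix A assume "A \<in> set_pmf (FF_CT_RSD I (truthful_report I) \<pi>)"
    then show "OPT I / 4 \<le> SW I A"
      using SW_le_4_SW_outcome As(2) by fastforce
  qed
qed

end
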